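(* Let $n\geq 4$ be even and let $\mathrm{D}_{2n}=\langle a,b\mid a^n=b^2=1,\ b^{-1}ab=a^{-1}\rangle$. Let $H\subseteq\langle a^2\rangle$ and $K\subseteq a\langle a^2\rangle$ satisfy $H^{-1}=H$ and $K^{-1}=K$. Put $S=bH\cup K$ and $T=bH\cup bK$. Then $\mathrm{Cay}(\mathrm{D}_{2n},S)\cong\mathrm{Cay}(\mathrm{D}_{2n},T)$. In particular, if $\mathrm{D}_{2n}$ has the $|S|$-DCI property, then $K=\emptyset$.
   Context: For a group $G$ and a subset $S\subseteq G$ with $1\notin S$, the Cayley digraph $\mathrm{Cay}(G,S)$ has vertex set $G$ and arc set $\{(g,sg)\mid g\in G,\ s\in S\}$. $\mathrm{Cay}(G,S)$ is a CI-digraph if for every $T\subseteq G$ with $1\notin T$ and $\mathrm{Cay}(G,T)\cong\mathrm{Cay}(G,S)$ there is $\alpha\in\mathrm{Aut}(G)$ with $S^\alpha=T$. For a positive integer $m$, $G$ has the $m$-DCI property if every Cayley digraph $\mathrm{Cay}(G,S)$ with $|S|=m$ is a CI-digraph. $H^{-1}=\{h^{-1}\mid h\in H\}$. *)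

theory Defs
  imports "HOL-Algebra.Algebra"
begin

definition cay_arcs :: "('a, 'b) monoid_scheme \<Rightarrow> 'a set \<Rightarrow> ('a \<times> 'a) set" where
  "cay_arcs G S = {(g, s \<otimes>\<^bsub>G\<^esub> g) | g s. g \<in> carrier G \<and> s \<in> S}"

definition cay_isomorphic :: "('a, 'b) monoid_scheme \<Rightarrow> 'a set \<Rightarrow> 'a set \<Rightarrow> bool" where
  "cay_isomorphic G S T \<longleftrightarrow>
     (\<exists>f. bij_betw f (carrier G) (carrier G) \<and>
          (\<forall>x\<in>carrier G. \<forall>y\<in>carrier G.
              (x, y) \<in> cay_arcs G S \<longleftrightarrow> (f x, f y) \<in> cay_arcs G T))"

definition CI_digraph :: "('a, 'b) monoid_scheme \<Rightarrow> 'a set \<Rightarrow> bool" where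
  "CI_digraph G S \<longleftrightarrow>
     (\<forall>T. T \<subseteq> carrier G \<and> \<one>\<^bsub>G\<^esub> \<notin> T \<and> cay_isomorphic G T S \<longrightarrow>
          (\<exists>\<alpha>\<in>iso G G. \<alpha> ` S = T))"

definition DCI_property :: "('a, 'b) monoid_scheme \<Rightarrow> nat \<Rightarrow> bool" where
  "DCI_property G m \<longleftrightarrow>
     (\<forall>S. S \<subseteq> carrier G \<and> \<one>\<^bsub>G\<^esub> \<notin> S \<and> card S = m \<longrightarrow> CI_digraph G S)"

end

theory Submission
  imports Defs
begin

(* The elements a^(2i) and b a^(2i) form a subgroup E of index 2 that contains b.  The map that fixes
   E pointwise and multiplies the other coset on the left by b is a bijection of D_2n, and it carries
   Cay(D_2n, S) onto Cay(D_2n, T): both connection sets meet E in bH, and off E they are K and bK,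
   where bK = Kb because K consists of powers of a and is inverse-closed.  If D_2n had the
   |S|-DCI property, some automorphism would map S onto T; for n > 2 every automorphism maps a into
   <a>, so it cannot send K, a subset of <a>, into T, a subset of b<a>. *)

lemma (in group) cay_arcs_iff:
  assumes "S \<subseteq> carrier G" and "x \<in> carrier G" and "y \<in> carrier G"
  shows "(x, y) \<in> cay_arcs G S \<longleftrightarrow> y \<otimes> inv x \<in> S"
proof -
  have "(x, y) \<in> cay_arcs G S \<longleftrightarrow> (\<exists>s\<in>S. y = s \<otimes> x)"
    using assms(2) unfolding cay_arcs_def by auto
  also have "\<dots> \<longleftrightarrow> (\<exists>s\<in>S. y \<otimes> inv x = s)"
    using assms by (metis inv_solve_right subsetD)
  finally show ?thesis by auto
qed

lemma cay_isomorphic_sym: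
  assumes "cay_isomorphic G S T"
  shows "cay_isomorphic G T S"
proof -
  obtain f where f: "bij_betw f (carrier G) (carrier G)"
    and arcs: "\<And>x y. x \<in> carrier G \<Longrightarrow> y \<in> carrier G \<Longrightarrow>
                 (x, y) \<in> cay_arcs G S \<longleftrightarrow> (f x, f y) \<in> cay_arcs G T"
    using assms unfolding cay_isomorphic_def by blast
  define g where "g = inv_into (carrier G) f"
  have g: "bij_betw g (carrier G) (carrier G)"
    unfolding g_def using f by (rule bij_betw_inv_into)
  have "(x, y) \<in> cay_arcs G T \<longleftrightarrow> (g x, g y) \<in> cay_arcs G S"
    if "x \<in> carrier G" and "y \<in> carrier G" for x y
    using arcs[of "g x" "g y"] that bij_betwE[OF g] bij_betw_inv_into_right[OF f]
    unfolding g_def by auto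
  then show ?thesis
    using g unfolding cay_isomorphic_def by blast
qed

lemma (in group) inv_mem_iff:
  assumes "(\<lambda>x. inv x) ` A = A" and "A \<subseteq> carrier G" and "x \<in> carrier G"
  shows "inv x \<in> A \<longleftrightarrow> x \<in> A"
  using assms by (metis image_iff inv_inv)

lemma DCI_property_imp_iso_image:
  assumes "DCI_property G (card S)"
    and "S \<subseteq> carrier G" and "\<one>\<^bsub>G\<^esub> \<notin> S" and "T \<subseteq> carrier G" and "\<one>\<^bsub>G\<^esub> \<notin> T"
    and "cay_isomorphic G S T"
  shows "\<exists>\<alpha>\<in>iso G G. \<alpha> ` S = T"
proof -
  have "CI_digraph G S"
    using assms(1-3) unfolding DCI_property_def by blast
  moreover have "cay_isomorphic G T S"
    using assms(6) by (rule cay_isomorphic_sym)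
  ultimately show ?thesis
    using assms(4,5) unfolding CI_digraph_def by blast
qed

(* The isomorphism fixes E pointwise and multiplies the other coset on the left by b. The
   hypothesis on E says that E is a subgroup of index at most 2. *)
lemma (in group) cay_isomorphic_twist:
  assumes S: "S \<subseteq> carrier G" and T: "T \<subseteq> carrier G"
    and E: "\<And>x y. x \<in> carrier G \<Longrightarrow> y \<in> carrier G \<Longrightarrow>
              y \<otimes> inv x \<in> E \<longleftrightarrow> (x \<in> E \<longleftrightarrow> y \<in> E)"
    and b: "b \<in> carrier G" and b_E: "b \<in> E"
    and inside_eq: "\<And>z. z \<in> carrier G \<Longrightarrow> z \<in> E \<Longrightarrow> z \<in> S \<longleftrightarrow> z \<in> T"
    and inside_conj: "\<And>z. z \<in> carrier G \<Longrightarrow> z \<in> E \<Longrightarrow> z \<in> S \<longleftrightarrow> b \<otimes> z \<otimes> inv b \<in> S"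
    and outside_left: "\<And>z. z \<in> carrier G \<Longrightarrow> z \<notin> E \<Longrightarrow> z \<in> S \<longleftrightarrow> b \<otimes> z \<in> T"
    and outside_right: "\<And>z. z \<in> carrier G \<Longrightarrow> z \<notin> E \<Longrightarrow> z \<in> S \<longleftrightarrow> z \<otimes> inv b \<in> T"
  shows "cay_isomorphic G S T"
proof -
  have mult_b_E: "b \<otimes> x \<in> E \<longleftrightarrow> x \<in> E" if "x \<in> carrier G" for x
    using E[of x "b \<otimes> x"] that b b_E by (simp add: m_assoc)
  define f where "f x = (if x \<in> E then x else b \<otimes> x)" for x
  define g where "g x = (if x \<in> E then x else inv b \<otimes> x)" for x
  have f_bij: "bij_betw f (carrier G) (carrier G)"
  proof (rule bij_betw_byWitness[where f' = g])
    have inv_b_E: "inv b \<otimes> x \<in> E \<longleftrightarrow> x \<in> E" if "x \<in> carrier G" for x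
      using mult_b_E[of "inv b \<otimes> x"] that b by (simp add: m_assoc[symmetric])
    show "\<forall>x\<in>carrier G. g (f x) = x" "\<forall>x\<in>carrier G. f (g x) = x"
      unfolding f_def g_def using b mult_b_E inv_b_E by (auto simp: m_assoc[symmetric])
    show "f ` carrier G \<subseteq> carrier G" "g ` carrier G \<subseteq> carrier G"
      unfolding f_def g_def using b by auto
  qed
  have "y \<otimes> inv x \<in> S \<longleftrightarrow> f y \<otimes> inv (f x) \<in> T"
    if x: "x \<in> carrier G" and y: "y \<in> carrier G" for x y
  proof -
    define z where "z = y \<otimes> inv x"
    have z: "z \<in> carrier G" and z_E: "z \<in> E \<longleftrightarrow> (x \<in> E \<longleftrightarrow> y \<in> E)"
      unfolding z_def using x y E by auto
    consider "x \<in> E" "y \<in> E" | "x \<in> E" "y \<notin> E" | "x \<notin> E" "y \<in> E" | "x \<notin> E" "y \<notin> E"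
      by blast
    then show ?thesis
    proof cases
      case 1
      then show ?thesis using inside_eq z z_E unfolding f_def z_def by simp
    next
      case 2
      then have "f y \<otimes> inv (f x) = b \<otimes> z"
        unfolding f_def z_def using x y b by (simp add: m_assoc)
      then show ?thesis using outside_left z z_E 2 unfolding z_def by simp
    next
      case 3
      then have "f y \<otimes> inv (f x) = z \<otimes> inv b"
        unfolding f_def z_def using x y b by (simp add: m_assoc inv_mult_group)
      then show ?thesis using outside_right z z_E 3 unfolding z_def by simp
    next
      case 4
      then have "f y \<otimes> inv (f x) = b \<otimes> z \<otimes> inv b"
        unfolding f_def z_def using x y b by (simp add: m_assoc inv_mult_group)
      moreover have "b \<otimes> z \<otimes> inv b \<in> E"
        using E[of b "b \<otimes> z"] mult_b_E z z_E 4 b b_E by simp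
      ultimately show ?thesis
        using inside_conj inside_eq z z_E 4 b unfolding z_def by simp
    qed
  qed
  then show ?thesis
    unfolding cay_isomorphic_def using f_bij bij_betwE[OF f_bij]
    by (auto simp: cay_arcs_iff[OF S] cay_arcs_iff[OF T])
qed

locale dihedral = group G for G (structure) +
  fixes n :: nat and a b :: 'a
  assumes n_pos: "0 < n"
    and a_carrier [simp]: "a \<in> carrier G" and b_carrier [simp]: "b \<in> carrier G"
    and generate_a_b: "generate G {a, b} = carrier G"
    and order_eq: "order G = 2 * n"
    and a_pow_n: "a [^] n = \<one>" and b_squared: "b [^] (2::nat) = \<one>"
    and inv_b_a_b: "inv b \<otimes> a \<otimes> b = inv a"
begin

lemma b_mult_b [simp]: "b \<otimes> b = \<one>"
  using b_squared by (simp add: numeral_2_eq_2)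

lemma inv_b [simp]: "inv b = b"
  using inv_equality[OF b_mult_b] by simp

lemma b_mult_b_mult [simp]: "x \<in> carrier G \<Longrightarrow> b \<otimes> (b \<otimes> x) = x"
  by (simp add: m_assoc[symmetric])

lemma b_a_pow_b: "b \<otimes> a [^] (i::int) \<otimes> b = a [^] (- i)"
proof -
  have "(\<lambda>x. b \<otimes> x \<otimes> b) \<in> hom G G"
    by (rule homI) (auto simp: m_assoc)
  then have "b \<otimes> a [^] i \<otimes> b = (b \<otimes> a \<otimes> b) [^] i"
    using hom_int_pow is_group by fastforce
  also have "\<dots> = a [^] (- i)"
    using inv_b_a_b by (simp add: int_pow_inv int_pow_neg)
  finally show ?thesis .
qed

lemma a_pow_mult_b: "a [^] (i::int) \<otimes> b = b \<otimes> a [^] (- i)"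
proof -
  have "a [^] i \<otimes> b = b \<otimes> (b \<otimes> a [^] i \<otimes> b)"
    by (simp add: m_assoc[symmetric])
  then show ?thesis
    by (simp add: b_a_pow_b)
qed

lemma a_pow_mult_a_pow [simp]: "a [^] (i::int) \<otimes> a [^] (j::int) = a [^] (i + j)"
  by (simp add: int_pow_mult)

lemma a_pow_mult_b_a_pow [simp]: "a [^] (i::int) \<otimes> (b \<otimes> a [^] (j::int)) = b \<otimes> a [^] (j - i)"
  by (simp add: m_assoc[symmetric] a_pow_mult_b) (simp add: m_assoc)

lemma b_a_pow_mult_a_pow [simp]: "b \<otimes> a [^] (i::int) \<otimes> a [^] (j::int) = b \<otimes> a [^] (i + j)"
  by (simp add: m_assoc)

lemma b_a_pow_mult_b_a_pow [simp]: "b \<otimes> a [^] (i::int) \<otimes> (b \<otimes> a [^] (j::int)) = a [^] (j - i)"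
  by (simp add: m_assoc)

lemma inv_a_pow [simp]: "inv (a [^] (i::int)) = a [^] (- i)"
  by (simp add: int_pow_neg)

lemma inv_b_a_pow [simp]: "inv (b \<otimes> a [^] (i::int)) = b \<otimes> a [^] i"
  by (simp add: inv_mult_group a_pow_mult_b)

abbreviation rotations :: "'a set" where
  "rotations \<equiv> range (\<lambda>i::int. a [^] i)"

abbreviation reflections :: "'a set" where
  "reflections \<equiv> range (\<lambda>i::int. b \<otimes> a [^] i)"

lemma carrier_eq_rotations_reflections: "carrier G = rotations \<union> reflections"
proof
  have sub: "subgroup (rotations \<union> reflections) G"
  proof (rule subgroupI)
    fix x assume "x \<in> rotations \<union> reflections"
    then show "inv x \<in> rotations \<union> reflections"
      by (metis (no_types, lifting) UnCI UnE imageE inv_a_pow inv_b_a_pow rangeI)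
  next
    fix x y assume "x \<in> rotations \<union> reflections" "y \<in> rotations \<union> reflections"
    then show "x \<otimes> y \<in> rotations \<union> reflections"
      by (elim UnE imageE) (simp_all add: m_assoc[symmetric])
  qed auto
  have gens: "{a, b} \<subseteq> rotations \<union> reflections"
  proof -
    have "a = a [^] (1::int)" "b = b \<otimes> a [^] (0::int)"
      by simp_all
    then show ?thesis by blast
  qed
  show "carrier G \<subseteq> rotations \<union> reflections"
    using generate_subgroup_incl[OF gens sub] generate_a_b by simp
qed auto

lemma finite_carrier: "finite (carrier G)"
  using order_eq n_pos unfolding order_def by (metis card.infinite mult_is_0 not_gr0 zero_neq_numeral)

lemma dihedral_cases [consumes 1, case_names rotation reflection]:
  assumes "x \<in> carrier G"
  obtains i :: int where "x = a [^] i" | i :: int where "x = b \<otimes> a [^] i"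
  using assms carrier_eq_rotations_reflections by auto

lemma ord_a_and_rotations_disjoint_reflections: "ord a = n \<and> rotations \<inter> reflections = {}"
proof -
  have fin: "finite rotations" "finite reflections"
    using finite_carrier carrier_eq_rotations_reflections by (auto intro: rev_finite_subset)
  have "card rotations = ord a"
    using generate_pow_card[OF a_carrier] generate_pow[OF a_carrier] by (simp add: full_SetCompr_eq)
  moreover have "ord a \<le> n"
    using pow_eq_id[OF a_carrier] a_pow_n n_pos by (simp add: dvd_imp_le)
  moreover have "card reflections \<le> card rotations"
    using card_image_le[OF fin(1), of "(\<otimes>) b"] by (simp add: image_image)
  moreover have "card rotations + card reflections = 2 * n + card (rotations \<inter> reflections)"
    using card_Un_Int[OF fin] carrier_eq_rotations_reflections order_eq unfolding order_def by simp
  ultimately have "ord a = n" and "card (rotations \<inter> reflections) = 0"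
    by linarith+
  then show ?thesis
    using fin by simp
qed

lemma ord_a: "ord a = n"
  using ord_a_and_rotations_disjoint_reflections by simp

lemma rotations_disjoint_reflections: "rotations \<inter> reflections = {}"
  using ord_a_and_rotations_disjoint_reflections by simp

lemma b_a_pow_neq_a_pow [simp]: "b \<otimes> a [^] (i::int) \<noteq> a [^] (j::int)"
  using rotations_disjoint_reflections by blast

lemma a_pow_neq_b_a_pow [simp]: "a [^] (i::int) \<noteq> b \<otimes> a [^] (j::int)"
  using b_a_pow_neq_a_pow by metis

lemma a_pow_eq_iff: "a [^] (i::int) = a [^] (j::int) \<longleftrightarrow> int n dvd j - i"
  using int_pow_eq[OF a_carrier] ord_a by simp

lemma generate_a_squared: "generate G {a [^] (2::nat)} = {a [^] i | i::int. even i}"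
proof -
  have "a [^] (2::nat) = a [^] (2::int)"
    by (metis int_pow_int of_nat_numeral)
  then show ?thesis
    using generate_pow[of "a [^] (2::nat)"] by (auto simp: int_pow_pow)
qed

lemma a_coset_generate_a_squared: "a <# generate G {a [^] (2::nat)} = {a [^] i | i::int. odd i}"
proof (intro equalityI subsetI)
  fix x assume "x \<in> a <# generate G {a [^] (2::nat)}"
  then obtain i :: int where "even i" and "x = a \<otimes> a [^] i"
    unfolding generate_a_squared l_coset_def by auto
  then show "x \<in> {a [^] i | i::int. odd i}"
    using a_pow_mult_a_pow[of 1 i] by auto
next
  fix x assume "x \<in> {a [^] i | i::int. odd i}"
  then obtain i :: int where "odd i" and "x = a [^] i" by auto
  then have "x = a \<otimes> a [^] (i - 1)" and "even (i - 1)"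
    using a_pow_mult_a_pow[of 1 "i - 1"] by simp_all
  then show "x \<in> a <# generate G {a [^] (2::nat)}"
    unfolding generate_a_squared l_coset_def by blast
qed

lemma iso_maps_rotations:
  assumes iso: "\<alpha> \<in> iso G G" and n_gt_2: "2 < n"
  shows "\<alpha> (a [^] (i::int)) \<in> rotations"
proof -
  have hom: "\<alpha> \<in> hom G G" and inj: "inj_on \<alpha> (carrier G)"
    using iso unfolding iso_def bij_betw_def by auto
  have square: "x [^] (2::int) = x \<otimes> x" if "x \<in> carrier G" for x
    using int_pow_mult[OF that, of 1 1] that by simp
  have "\<alpha> a \<notin> reflections"
  proof
    assume "\<alpha> a \<in> reflections"
    then obtain j :: int where "\<alpha> a = b \<otimes> a [^] j" by auto
    then have "\<alpha> (a [^] (2::int)) = \<alpha> (a [^] (0::int))"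
      using hom_int_pow[OF hom a_carrier is_group is_group, of 2] square hom_one[OF hom]
      by simp
    then have "int n dvd 0 - 2"
      using inj a_pow_eq_iff unfolding inj_on_def by (metis int_pow_closed a_carrier)
    then have "n dvd 2"
      by (metis dvd_minus_iff diff_0 of_nat_dvd_iff of_nat_numeral)
    then show False
      using n_gt_2 by (simp add: dvd_imp_le leD)
  qed
  then obtain j :: int where "\<alpha> a = a [^] j"
    using hom_in_carrier[OF hom a_carrier] carrier_eq_rotations_reflections by auto
  then show ?thesis
    using hom_int_pow[OF hom a_carrier is_group is_group, of i] by (simp add: int_pow_pow)
qed

lemma b_coset_mem_iff:
  assumes "A \<subseteq> carrier G" and "z \<in> carrier G"
  shows "z \<in> b <# A \<longleftrightarrow> b \<otimes> z \<in> A"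
proof
  assume "z \<in> b <# A"
  then obtain h where "h \<in> A" and "z = b \<otimes> h"
    unfolding l_coset_def by blast
  then show "b \<otimes> z \<in> A"
    using assms(1) by auto
next
  assume "b \<otimes> z \<in> A"
  moreover have "z = b \<otimes> (b \<otimes> z)"
    using assms(2) by simp
  ultimately show "z \<in> b <# A"
    unfolding l_coset_def by blast
qed

lemma b_coset_rotations: "A \<subseteq> rotations \<Longrightarrow> b <# A \<subseteq> reflections"
  unfolding l_coset_def by auto

lemma b_a_pow_notin_subset_rotations: "A \<subseteq> rotations \<Longrightarrow> b \<otimes> a [^] (i::int) \<notin> A"
  using b_a_pow_neq_a_pow by blast

lemma one_notin_b_coset: "A \<subseteq> rotations \<Longrightarrow> \<one> \<notin> b <# A"
proof
  assume "A \<subseteq> rotations" and "\<one> \<in> b <# A"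
  then have "\<one> \<in> reflections"
    using b_coset_rotations by blast
  then obtain i :: int where "\<one> = b \<otimes> a [^] i"
    by (rule rangeE)
  moreover have "b \<otimes> a [^] i \<noteq> a [^] (0::int)"
    by (rule b_a_pow_neq_a_pow)
  ultimately show False
    by simp
qed

lemma b_conj_mem_iff:
  assumes A: "A \<subseteq> rotations" and inv_A: "(\<lambda>x. inv x) ` A = A" and z: "z \<in> carrier G"
  shows "b \<otimes> z \<otimes> b \<in> A \<longleftrightarrow> z \<in> A"
proof -
  have "A \<subseteq> carrier G"
    using A by auto
  from z show ?thesis
  proof (cases rule: dihedral_cases)
    case (rotation i)
    then show ?thesis
      using inv_mem_iff[OF inv_A \<open>A \<subseteq> carrier G\<close>, of "a [^] i"] by (simp add: b_a_pow_b)
  next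
    case (reflection i)
    then have "b \<otimes> z \<otimes> b = b \<otimes> a [^] (- i)"
      by (simp add: m_assoc[symmetric] a_pow_mult_b)
    then show ?thesis
      using b_a_pow_notin_subset_rotations[OF A] reflection by simp
  qed
qed

lemma b_conj_mem_b_coset_iff:
  assumes A: "A \<subseteq> rotations" and inv_A: "(\<lambda>x. inv x) ` A = A" and z: "z \<in> carrier G"
  shows "b \<otimes> z \<otimes> b \<in> b <# A \<longleftrightarrow> z \<in> b <# A"
proof -
  have "A \<subseteq> carrier G"
    using A by auto
  moreover have "b \<otimes> (b \<otimes> z \<otimes> b) = b \<otimes> (b \<otimes> z) \<otimes> b"
    using z by (simp add: m_assoc)
  ultimately show ?thesis
    using b_conj_mem_iff[OF A inv_A, of "b \<otimes> z"] b_coset_mem_iff z by simp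
qed

end

locale even_dihedral = dihedral +
  assumes even_n: "even n"
begin

definition even_elems :: "'a set" where
  "even_elems = {a [^] i | i::int. even i} \<union> {b \<otimes> a [^] i | i::int. even i}"

lemma a_pow_in_even_elems [simp]: "a [^] (i::int) \<in> even_elems \<longleftrightarrow> even i"
proof -
  have "a [^] i \<in> even_elems \<longleftrightarrow>
      (\<exists>j::int. even j \<and> a [^] i = a [^] j) \<or> (\<exists>j::int. even j \<and> a [^] i = b \<otimes> a [^] j)"
    unfolding even_elems_def by blast
  also have "\<dots> \<longleftrightarrow> (\<exists>j::int. even j \<and> a [^] i = a [^] j)"
    by simp
  also have "\<dots> \<longleftrightarrow> even i"
  proof
    assume "\<exists>j::int. even j \<and> a [^] i = a [^] j"
    then obtain j :: int where "even j" and "int n dvd j - i"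
      using a_pow_eq_iff by blast
    moreover have "2 dvd int n"
      using even_n by simp
    ultimately have "even j" and "even (j - i)"
      using dvd_trans by blast+
    then show "even i"
      by simp
  qed blast
  finally show ?thesis .
qed

lemma b_a_pow_in_even_elems [simp]: "b \<otimes> a [^] (i::int) \<in> even_elems \<longleftrightarrow> even i"
proof -
  have "b \<otimes> a [^] i \<in> even_elems \<longleftrightarrow> (\<exists>j::int. even j \<and> b \<otimes> a [^] i = b \<otimes> a [^] j)"
    unfolding even_elems_def by auto
  also have "\<dots> \<longleftrightarrow> (\<exists>j::int. even j \<and> a [^] i = a [^] j)"
    by simp
  also have "\<dots> \<longleftrightarrow> a [^] i \<in> even_elems"
    unfolding even_elems_def by auto
  finally show ?thesis
    by simp
qed

lemma quotient_in_even_elems: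
  assumes "x \<in> carrier G" and "y \<in> carrier G"
  shows "y \<otimes> inv x \<in> even_elems \<longleftrightarrow> (x \<in> even_elems \<longleftrightarrow> y \<in> even_elems)"
  using assms by (elim dihedral_cases) (simp_all, blast+)

lemma b_mult_in_even_elems [simp]: "z \<in> carrier G \<Longrightarrow> b \<otimes> z \<in> even_elems \<longleftrightarrow> z \<in> even_elems"
  by (elim dihedral_cases) (simp_all add: m_assoc[symmetric])

lemma mult_b_in_even_elems [simp]: "z \<in> carrier G \<Longrightarrow> z \<otimes> b \<in> even_elems \<longleftrightarrow> z \<in> even_elems"
  by (elim dihedral_cases) (simp_all add: a_pow_mult_b m_assoc)

end

locale dihedral_HK = even_dihedral +
  fixes H K :: "'a set"
  assumes H_sub: "H \<subseteq> generate G {a [^] (2::nat)}"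
    and K_sub: "K \<subseteq> a <# generate G {a [^] (2::nat)}"
    and inv_H: "(\<lambda>x. inv x) ` H = H" and inv_K: "(\<lambda>x. inv x) ` K = K"
begin

lemma H_even_powers:
  assumes "h \<in> H"
  obtains i :: int where "even i" and "h = a [^] i"
  using assms H_sub generate_a_squared by auto

lemma K_odd_powers:
  assumes "k \<in> K"
  obtains i :: int where "odd i" and "k = a [^] i"
  using assms K_sub a_coset_generate_a_squared by auto

lemma H_rotations: "H \<subseteq> rotations"
  by (auto elim: H_even_powers)

lemma K_rotations: "K \<subseteq> rotations"
  by (auto elim: K_odd_powers)

lemma K_carrier: "K \<subseteq> carrier G"
  using K_rotations by auto

lemma b_coset_H_in_even_elems: "x \<in> b <# H \<Longrightarrow> x \<in> even_elems"
  unfolding l_coset_def by (auto elim: H_even_powers)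

lemma K_notin_even_elems: "x \<in> K \<Longrightarrow> x \<notin> even_elems"
  by (auto elim: K_odd_powers)

lemma b_coset_K_notin_even_elems: "x \<in> b <# K \<Longrightarrow> x \<notin> even_elems"
  unfolding l_coset_def by (auto elim: K_odd_powers)

lemma cay_isomorphic_bH_K: "cay_isomorphic G ((b <# H) \<union> K) ((b <# H) \<union> (b <# K))"
proof (rule cay_isomorphic_twist)
  have "b <# H \<subseteq> carrier G" and "b <# K \<subseteq> carrier G"
    using b_coset_rotations[OF H_rotations] b_coset_rotations[OF K_rotations] by auto
  then show "(b <# H) \<union> K \<subseteq> carrier G" and "(b <# H) \<union> (b <# K) \<subseteq> carrier G"
    using K_carrier by auto
  show "b \<in> even_elems"
    using b_a_pow_in_even_elems[of 0] by simp
  show "y \<otimes> inv x \<in> even_elems \<longleftrightarrow> (x \<in> even_elems \<longleftrightarrow> y \<in> even_elems)"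
    if "x \<in> carrier G" and "y \<in> carrier G" for x y
    using that by (rule quotient_in_even_elems)
  fix z assume z: "z \<in> carrier G"
  show "z \<in> (b <# H) \<union> K \<longleftrightarrow> z \<in> (b <# H) \<union> (b <# K)" if "z \<in> even_elems"
    using that K_notin_even_elems b_coset_K_notin_even_elems by blast
  show "z \<in> (b <# H) \<union> K \<longleftrightarrow> b \<otimes> z \<otimes> inv b \<in> (b <# H) \<union> K" if "z \<in> even_elems"
  proof -
    have "b \<otimes> z \<otimes> b \<in> even_elems"
      using that z by simp
    then show ?thesis
      using that K_notin_even_elems b_conj_mem_b_coset_iff[OF H_rotations inv_H z] by auto
  qed
  show "z \<in> (b <# H) \<union> K \<longleftrightarrow> b \<otimes> z \<in> (b <# H) \<union> (b <# K)" if "z \<notin> even_elems"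
  proof -
    have "b \<otimes> z \<notin> even_elems"
      using that z by simp
    moreover have "b \<otimes> z \<in> b <# K \<longleftrightarrow> z \<in> K"
      using b_coset_mem_iff[OF K_carrier, of "b \<otimes> z"] z by simp
    ultimately show ?thesis
      using that b_coset_H_in_even_elems by auto
  qed
  show "z \<in> (b <# H) \<union> K \<longleftrightarrow> z \<otimes> inv b \<in> (b <# H) \<union> (b <# K)" if "z \<notin> even_elems"
  proof -
    have "z \<otimes> b \<notin> even_elems"
      using that z by simp
    moreover have "z \<otimes> b \<in> b <# K \<longleftrightarrow> b \<otimes> z \<otimes> b \<in> K"
      using b_coset_mem_iff[OF K_carrier, of "z \<otimes> b"] z by (simp add: m_assoc)
    ultimately show ?thesis
      using that b_coset_H_in_even_elems b_conj_mem_iff[OF K_rotations inv_K z] by auto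
  qed
qed simp

lemma DCI_property_imp_K_empty:
  assumes n_gt_2: "2 < n" and DCI: "DCI_property G (card ((b <# H) \<union> K))"
  shows "K = {}"
proof (rule ccontr)
  assume "K \<noteq> {}"
  then obtain k where k: "k \<in> K"
    by blast
  have reflections_T: "(b <# H) \<union> (b <# K) \<subseteq> reflections"
    using b_coset_rotations H_rotations K_rotations by blast
  have "\<one> \<notin> K"
    using K_notin_even_elems a_pow_in_even_elems[of 0] by auto
  then have "\<one> \<notin> (b <# H) \<union> K" and "\<one> \<notin> (b <# H) \<union> (b <# K)"
    using one_notin_b_coset H_rotations K_rotations by auto
  moreover have "(b <# H) \<union> K \<subseteq> carrier G" and "(b <# H) \<union> (b <# K) \<subseteq> carrier G"
    using reflections_T K_rotations by auto
  ultimately obtain \<alpha> where iso: "\<alpha> \<in> iso G G"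
    and image: "\<alpha> ` ((b <# H) \<union> K) = (b <# H) \<union> (b <# K)"
    using DCI_property_imp_iso_image[OF DCI _ _ _ _ cay_isomorphic_bH_K] by blast
  obtain i :: int where "k = a [^] i"
    using k by (rule K_odd_powers)
  then have "\<alpha> k \<in> rotations"
    using iso_maps_rotations[OF iso n_gt_2] by simp
  moreover have "\<alpha> k \<in> reflections"
    using k image reflections_T by blast
  ultimately show False
    using rotations_disjoint_reflections by blast
qed

end

theorem lemma3p2:
  fixes G (structure) and n :: nat and a b :: 'a and H K :: "'a set"
  assumes "group G"
    and "n \<ge> 4" and "even n"
    and "a \<in> carrier G" and "b \<in> carrier G"
    and "generate G {a, b} = carrier G"
    and "order G = 2 * n"
    and "a [^] n = \<one>" and "b [^] (2::nat) = \<one>"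
    and "inv b \<otimes> a \<otimes> b = inv a"
    and "H \<subseteq> generate G {a [^] (2::nat)}"
    and "K \<subseteq> a <# generate G {a [^] (2::nat)}"
    and "(\<lambda>x. inv x) ` H = H" and "(\<lambda>x. inv x) ` K = K"
  shows "cay_isomorphic G ((b <# H) \<union> K) ((b <# H) \<union> (b <# K)) \<and>
         (DCI_property G (card ((b <# H) \<union> K)) \<longrightarrow> K = {})"
proof -
  interpret dihedral_HK G n a b H K
    unfolding dihedral_HK_def dihedral_HK_axioms_def even_dihedral_def even_dihedral_axioms_def
      dihedral_def dihedral_axioms_def
    using assms by auto
  show ?thesis
    using cay_isomorphic_bH_K DCI_property_imp_K_empty \<open>n \<ge> 4\<close> by simp
qed

end
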